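(* Let $J = \{k \in \mathbb{N} : \mathrm{N}(k+1) - \mathrm{N}(k) = 2\}$. Then $J = \{2^{m+1} - (m+1) - 1 : m \in \mathbb{N}\}$.
   Context: The function $\mathrm{N} : \mathbb{N} \to \mathbb{N}$, $\mathbb{N} = \{1,2,\dots\}$, is defined recursively by $\mathrm{N}(1) = 2$ and, for $k \ge 2$, $\mathrm{N}(k) = \max_{i \in \{2,\dots,k\}} \min(2i, \mathrm{N}(k-i+1) + i)$. *)

theory Defs
  imports Main
begin

text \<open>The function N of the paper, on positive naturals. We use type nat; the value at 0
  is an irrelevant artefact (set to 2) and is never used in the statement.\<close>

function Nf :: "nat \<Rightarrow> nat" where
  "Nf k = (if k \<le> 1 then 2
           else Max ((\<lambda>i. min (2 * i) (Nf (k - i + 1) + i)) ` {2..k}))"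
  by auto
termination
  by (relation "measure id") auto

end

theory Submission
  imports Defs
begin

text \<open>With \<open>t m = 2^(m+1) - m - 2\<close> one has \<open>N k = k + m + 1\<close> on each block \<open>t m < k \<le> t (m+1)\<close>.
  This is proved by strong induction: in the maximum defining \<open>N k\<close>, an index \<open>i\<close> with
  \<open>2 i > k + m + 1\<close> sends \<open>k - i + 1\<close> into an earlier block, which caps the second argument
  of the minimum at \<open>k + m + 1\<close>, while \<open>i = (k + m + 2) div 2\<close> attains this value.
  Hence \<open>N\<close> grows by 1 inside a block and by 2 exactly when crossing from one block to the
  next, i.e. at \<open>k = t (m+1)\<close>.\<close>

declare Nf.simps[simp del]

definition jump_point :: "nat \<Rightarrow> nat" where
  "jump_point m = 2 ^ (m + 1) - (m + 1) - 1"

lemma Suc_le_two_power: "m + 1 \<le> (2::nat) ^ m"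
  by (induction m) auto

lemma jump_point_add: "jump_point m + m + 2 = 2 ^ Suc m"
  using Suc_le_two_power[of m] unfolding jump_point_def by simp

lemma jump_point_0 [simp]: "jump_point 0 = 0"
  and jump_point_Suc_0 [simp]: "jump_point (Suc 0) = 1"
  by (simp_all add: jump_point_def)

lemma strict_mono_jump_point: "strict_mono jump_point"
  unfolding strict_mono_Suc_iff
proof
  fix m
  have "m + 2 \<le> 2 ^ Suc m" using Suc_le_two_power[of "Suc m"] by simp
  then show "jump_point m < jump_point (Suc m)"
    using jump_point_add[of m] jump_point_add[of "Suc m"] by simp
qed

lemma jump_point_less_iff [simp]: "jump_point m < jump_point n \<longleftrightarrow> m < n"
  using strict_mono_jump_point strict_mono_less by blast

lemma jump_point_le_iff [simp]: "jump_point m \<le> jump_point n \<longleftrightarrow> m \<le> n"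
  using strict_mono_jump_point strict_mono_less_eq by blast

lemma less_jump_point_Suc: "k < jump_point (Suc k)"
  using jump_point_add[of "Suc k"] Suc_le_two_power[of k] by simp

definition level :: "nat \<Rightarrow> nat" where
  "level k = (LEAST m. k \<le> jump_point (Suc m))"

lemma level_le_iff: "level k \<le> n \<longleftrightarrow> k \<le> jump_point (Suc n)"
proof
  have "k \<le> jump_point (Suc (level k))"
    unfolding level_def by (rule LeastI) (rule less_imp_le[OF less_jump_point_Suc])
  then show "level k \<le> n \<Longrightarrow> k \<le> jump_point (Suc n)"
    using jump_point_le_iff order_trans by (metis Suc_le_mono)
qed (simp add: level_def Least_le)

lemma le_jump_point_Suc_level: "k \<le> jump_point (Suc (level k))"
  using level_le_iff by blast

lemma jump_point_level_less: "1 \<le> k \<Longrightarrow> jump_point (level k) < k"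
  using level_le_iff[of k "level k - 1"] by (cases "level k") auto

lemma le_level_if_jump_point_less: "jump_point n < k \<Longrightarrow> n \<le> level k"
  using le_jump_point_Suc_level[of k] jump_point_le_iff[of "Suc (level k)" n]
  by (meson not_less_eq_eq order_trans not_le)

lemma level_eqI: "jump_point m < k \<Longrightarrow> k \<le> jump_point (Suc m) \<Longrightarrow> level k = m"
  using le_level_if_jump_point_less level_le_iff by (meson antisym)

lemma level_Suc_0 [simp]: "level (Suc 0) = 0"
  by (rule level_eqI) simp_all

lemma level_pos: "2 \<le> k \<Longrightarrow> 1 \<le> level k"
  using level_le_iff[of k 0] by simp

lemma Nf_unfold:
  "2 \<le> k \<Longrightarrow> Nf k = Max ((\<lambda>i. min (2 * i) (Nf (k - i + 1) + i)) ` {2..k})"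
  by (subst Nf.simps) simp

lemma Nf_candidate_le:
  assumes IH: "\<And>j. 1 \<le> j \<Longrightarrow> j < k \<Longrightarrow> Nf j = j + level j + 1"
    and "2 \<le> k" and i: "i \<in> {2..k}"
  shows "min (2 * i) (Nf (k - i + 1) + i) \<le> k + level k + 1"
proof (cases "2 * i \<le> k + level k + 1")
  case False
  define m where "m = level k"
  define j where "j = k - i + 1"
  have "1 \<le> m" using level_pos[OF \<open>2 \<le> k\<close>] by (simp add: m_def)
  have "k \<le> jump_point (Suc m)" using le_jump_point_Suc_level by (simp add: m_def)
  moreover have "jump_point m + m + 2 = 2 ^ Suc m" "jump_point (Suc m) + Suc m + 2 = 2 * 2 ^ Suc m"
    using jump_point_add[of m] jump_point_add[of "Suc m"] by simp_all
  ultimately have "j \<le> jump_point (Suc (m - 1))"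
    using False i \<open>1 \<le> m\<close> unfolding j_def m_def by simp
  then have "level j \<le> m - 1" by (simp add: level_le_iff)
  moreover have "Nf j = j + level j + 1" using i by (intro IH) (auto simp: j_def)
  ultimately show ?thesis using i \<open>1 \<le> m\<close> by (simp add: j_def m_def)
qed simp

lemma Nf_candidate_attains:
  assumes IH: "\<And>j. 1 \<le> j \<Longrightarrow> j < k \<Longrightarrow> Nf j = j + level j + 1"
    and "2 \<le> k"
  defines "i \<equiv> (k + level k + 2) div 2"
  shows "i \<in> {2..k}" and "k + level k + 1 \<le> min (2 * i) (Nf (k - i + 1) + i)"
proof -
  define m where "m = level k"
  define j where "j = k - i + 1"
  have "1 \<le> m" using level_pos[OF \<open>2 \<le> k\<close>] by (simp add: m_def)
  have "jump_point m < k" using jump_point_level_less \<open>2 \<le> k\<close> by (simp add: m_def)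
  moreover have "m + 1 \<le> 2 ^ m" by (rule Suc_le_two_power)
  ultimately show i_range: "i \<in> {2..k}"
    using \<open>2 \<le> k\<close> \<open>1 \<le> m\<close> jump_point_add[of m] by (auto simp: i_def m_def)
  have "2 * i \<le> k + m + 2" by (simp add: i_def m_def)
  moreover have "jump_point m + m + 2 = 2 * 2 ^ m" using jump_point_add[of m] by simp
  moreover have "jump_point (m - 1) + m + 1 = 2 ^ m"
    using jump_point_add[of "m - 1"] \<open>1 \<le> m\<close> by simp
  ultimately have "jump_point (m - 1) < j"
    using \<open>jump_point m < k\<close> i_range unfolding j_def by simp
  then have "m - 1 \<le> level j" by (rule le_level_if_jump_point_less)
  moreover have "Nf j = j + level j + 1" using i_range by (intro IH) (auto simp: j_def)
  ultimately have "k + m + 1 \<le> Nf j + i" using i_range \<open>1 \<le> m\<close> by (simp add: j_def)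
  moreover have "k + m + 1 \<le> 2 * i" unfolding i_def m_def by linarith
  ultimately show "k + level k + 1 \<le> min (2 * i) (Nf (k - i + 1) + i)"
    by (simp add: j_def m_def)
qed

theorem Nf_eq: "1 \<le> k \<Longrightarrow> Nf k = k + level k + 1"
proof (induction k rule: less_induct)
  case (less k)
  show ?case
  proof (cases "k = 1")
    case True
    then show ?thesis by (simp add: Nf.simps)
  next
    case False
    with less.prems have "2 \<le> k" by simp
    let ?S = "(\<lambda>i. min (2 * i) (Nf (k - i + 1) + i)) ` {2..k}"
    have IH: "\<And>j. 1 \<le> j \<Longrightarrow> j < k \<Longrightarrow> Nf j = j + level j + 1"
      using less.IH by blast
    have "Max ?S \<le> k + level k + 1"
      using Nf_candidate_le[OF IH \<open>2 \<le> k\<close>] \<open>2 \<le> k\<close> by (simp add: Max_le_iff)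
    moreover have "k + level k + 1 \<le> Max ?S"
      using Nf_candidate_attains[OF IH \<open>2 \<le> k\<close>] by (blast intro: Max_ge order_trans)
    ultimately show ?thesis using Nf_unfold[OF \<open>2 \<le> k\<close>] by simp
  qed
qed

lemma level_Suc:
  assumes "1 \<le> k"
  shows "level (Suc k) = (if k = jump_point (Suc (level k)) then Suc (level k) else level k)"
proof (cases "k = jump_point (Suc (level k))")
  case True
  have "jump_point (Suc (level k)) < Suc k" "Suc k \<le> jump_point (Suc (Suc (level k)))"
    using True jump_point_less_iff[of "Suc (level k)" "Suc (Suc (level k))"] by linarith+
  then have "level (Suc k) = Suc (level k)" by (rule level_eqI)
  then show ?thesis by (simp only: if_P[OF True])
next
  case False
  then have "jump_point (level k) < Suc k" "Suc k \<le> jump_point (Suc (level k))"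
    using le_jump_point_Suc_level[of k] jump_point_level_less[OF assms] by linarith+
  then have "level (Suc k) = level k" by (rule level_eqI)
  then show ?thesis by (simp only: if_not_P[OF False])
qed

lemma Nf_Suc_diff:
  assumes "1 \<le> k"
  shows "int (Nf (k + 1)) - int (Nf k) = (if k = jump_point (Suc (level k)) then 2 else 1)"
proof -
  have "Nf (k + 1) = k + level (Suc k) + 2" and "Nf k = k + level k + 1"
    using Nf_eq[of "k + 1"] Nf_eq[OF assms] by simp_all
  then show ?thesis using level_Suc[OF assms] by (simp split: if_split)
qed

lemma eq_jump_point_Suc_level_iff:
  "k = jump_point (Suc (level k)) \<longleftrightarrow> k \<in> range (\<lambda>m. jump_point (Suc m))"
proof
  assume "k \<in> range (\<lambda>m. jump_point (Suc m))"
  then obtain m where k: "k = jump_point (Suc m)" by blast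
  then have "level k = m" by (intro level_eqI) simp_all
  with k show "k = jump_point (Suc (level k))" by simp
qed blast

theorem lemma7p20:
  shows "{k :: nat. k \<ge> 1 \<and> int (Nf (k + 1)) - int (Nf k) = 2}
         = {2 ^ (m + 1) - (m + 1) - 1 | m :: nat. m \<ge> 1}"
proof -
  have "{k. k \<ge> 1 \<and> int (Nf (k + 1)) - int (Nf k) = 2} = range (\<lambda>m. jump_point (Suc m))"
  proof (rule set_eqI)
    fix k
    have "k \<in> range (\<lambda>m. jump_point (Suc m)) \<Longrightarrow> 1 \<le> k"
      using jump_point_le_iff[of 1] by (auto simp del: jump_point_le_iff)
    then show "k \<in> {k. k \<ge> 1 \<and> int (Nf (k + 1)) - int (Nf k) = 2}
        \<longleftrightarrow> k \<in> range (\<lambda>m. jump_point (Suc m))"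
      using Nf_Suc_diff[of k] eq_jump_point_Suc_level_iff[of k] by auto
  qed
  also have "\<dots> = {jump_point m | m. m \<ge> 1}"
    by (auto dest: Suc_le_D)
  finally show ?thesis by (simp add: jump_point_def)
qed

end
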